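(* Let $\pi\in S_n$ be a 321-avoiding permutation which is not the identity, and let $i_1<i_2<\dots<i_r$ be its excedance locations (the indices $i$ with $\pi(i)>i$). Then the connectivity set of $\pi$ has cardinality $$i_1+\sum_{j=2}^{r}\max\{i_j-\pi(i_{j-1}),0\}+n-\pi(i_r).$$
   Context: A permutation $\pi$ of $[n]$ is 321-avoiding if there are no $i<j<k$ with $\pi(k)<\pi(j)<\pi(i)$. The connectivity set of $\sigma\in S_n$ is the set of indices $1\le i\le n$ such that $\sigma(k)<i$ for all $k<i$. *)

theory Defs
  imports "HOL-Combinatorics.Permutations"
begin

text \<open>Permutations of [n] = {1..n} are functions nat => nat with pi permutes {1..n}.\<close>

definition avoids321 :: "nat \<Rightarrow> (nat \<Rightarrow> nat) \<Rightarrow> bool" where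
  "avoids321 n \<pi> \<longleftrightarrow>
     \<not> (\<exists>i j k. 1 \<le> i \<and> i < j \<and> j < k \<and> k \<le> n \<and> \<pi> k < \<pi> j \<and> \<pi> j < \<pi> i)"

definition conn_set :: "nat \<Rightarrow> (nat \<Rightarrow> nat) \<Rightarrow> nat set" where
  "conn_set n \<sigma> = {i. 1 \<le> i \<and> i \<le> n \<and> (\<forall>k. 1 \<le> k \<and> k < i \<longrightarrow> \<sigma> k < i)}"

definition excedances :: "nat \<Rightarrow> (nat \<Rightarrow> nat) \<Rightarrow> nat set" where
  "excedances n \<pi> = {i. 1 \<le> i \<and> i \<le> n \<and> \<pi> i > i}"

end

theory Submission
  imports Defs
begin

text \<open>An index \<open>i\<close> fails to lie in the connectivity set exactly when some excedance \<open>e\<close>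
  jumps over it, i.e. \<open>i \<in> {e<..\<pi> e}\<close>; so the complement of the connectivity set is the union of
  these intervals. For a 321-avoiding permutation the excedance values increase with the
  excedances, hence only consecutive intervals can overlap, and they do so in
  \<open>{i\<^sub>j<..\<pi> i\<^sub>j\<^sub>-\<^sub>1}\<close>. Counting the union of such a chain of intervals gives the formula.\<close>

definition gap_sum :: "(nat \<Rightarrow> nat) \<Rightarrow> nat list \<Rightarrow> int" where
  "gap_sum f xs = (\<Sum>j\<in>{1..<length xs}. max (int (xs ! j) - int (f (xs ! (j - 1)))) 0)"

lemma gap_sum_singleton [simp]: "gap_sum f [x] = 0"
  by (simp add: gap_sum_def)

lemma gap_sum_Cons_Cons:
  "gap_sum f (x # y # zs) = max (int y - int (f x)) 0 + gap_sum f (y # zs)"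
proof -
  let ?g = "\<lambda>xs j. max (int (xs ! j) - int (f (xs ! (j - 1)))) (0::int)"
  have "gap_sum f (x # y # zs) = (\<Sum>j\<in>{1..<Suc (Suc (length zs))}. ?g (x # y # zs) j)"
    by (simp add: gap_sum_def)
  also have "\<dots> = ?g (x # y # zs) 1 + (\<Sum>j\<in>{Suc 1..<Suc (Suc (length zs))}. ?g (x # y # zs) j)"
    by (rule sum.atLeast_Suc_lessThan) simp
  also have "(\<Sum>j\<in>{Suc 1..<Suc (Suc (length zs))}. ?g (x # y # zs) j)
      = (\<Sum>j\<in>{1..<Suc (length zs)}. ?g (x # y # zs) (Suc j))"
    by (rule sum.shift_bounds_Suc_ivl)
  also have "\<dots> = (\<Sum>j\<in>{1..<Suc (length zs)}. ?g (y # zs) j)"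
    by (rule sum.cong) (auto simp: nth_Cons split: nat.splits)
  finally show ?thesis by (simp add: gap_sum_def)
qed

lemma card_UN_chain_intervals:
  assumes "xs \<noteq> []" "sorted_wrt (<) xs" "sorted_wrt (<) (map f xs)" "\<forall>x\<in>set xs. x < f x"
  shows "int (card (\<Union>x\<in>set xs. {x<..f x})) = int (f (last xs)) - int (hd xs) - gap_sum f xs"
  using assms
proof (induction xs)
  case Nil
  then show ?case by simp
next
  case (Cons x ys)
  show ?case
  proof (cases ys)
    case Nil
    with Cons.prems show ?thesis by simp
  next
    case ys: (Cons y zs)
    let ?V = "\<Union>z\<in>set ys. {z<..f z}"
    have IH: "int (card ?V) = int (f (last ys)) - int y - gap_sum f ys"
      using Cons.IH Cons.prems ys by auto
    have "x < y" "f x < f y" "\<forall>z\<in>set ys. y \<le> z \<and> f x < f z"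
      using Cons.prems ys by auto
    then have overlap: "{x<..f x} \<inter> ?V = {y<..f x}"
      using ys by fastforce
    have "card ({x<..f x} \<union> ?V) + card ({x<..f x} \<inter> ?V) = card {x<..f x} + card ?V"
      by (rule card_Un_Int[symmetric]) auto
    moreover have "int (card {x<..f x}) = int (f x) - int x"
      using Cons.prems by auto
    ultimately show ?thesis
      using overlap IH ys by (simp add: gap_sum_Cons_Cons)
  qed
qed

lemma conn_set_eq_Diff_UN_excedances:
  "conn_set n \<pi> = {1..n} - (\<Union>e\<in>excedances n \<pi>. {e<..\<pi> e})"
proof (intro set_eqI iffI)
  fix i assume i: "i \<in> conn_set n \<pi>"
  then have "i \<notin> (\<Union>e\<in>excedances n \<pi>. {e<..\<pi> e})"
    unfolding conn_set_def excedances_def by fastforce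
  with i show "i \<in> {1..n} - (\<Union>e\<in>excedances n \<pi>. {e<..\<pi> e})"
    unfolding conn_set_def by auto
next
  fix i assume i: "i \<in> {1..n} - (\<Union>e\<in>excedances n \<pi>. {e<..\<pi> e})"
  have "\<pi> k < i" if "1 \<le> k" "k < i" for k
  proof (rule ccontr)
    assume "\<not> \<pi> k < i"
    with that i have "k \<in> excedances n \<pi>" "i \<in> {k<..\<pi> k}"
      unfolding excedances_def by auto
    with i show False by blast
  qed
  with i show "i \<in> conn_set n \<pi>"
    unfolding conn_set_def by auto
qed

lemma excedances_nonempty:
  assumes "\<pi> permutes {1..n}" "\<pi> \<noteq> id"
  shows "excedances n \<pi> \<noteq> {}"
proof -
  define i where "i = (LEAST i. \<pi> i \<noteq> i)"
  have moved: "\<pi> i \<noteq> i"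
    unfolding i_def by (rule LeastI_ex) (use assms(2) in auto)
  have fixed_below: "\<pi> j = j" if "j < i" for j
    using that not_less_Least unfolding i_def by blast
  have "\<not> \<pi> i < i"
  proof
    assume "\<pi> i < i"
    then have "\<pi> (\<pi> i) = \<pi> i" by (rule fixed_below)
    with moved show False
      using permutes_inj[OF assms(1)] by (metis injD)
  qed
  moreover have "i \<in> {1..n}"
    using moved permutes_not_in[OF assms(1)] by blast
  ultimately have "i \<in> excedances n \<pi>"
    using moved unfolding excedances_def by auto
  then show ?thesis by blast
qed

lemma avoids321_strict_mono_on_excedances:
  assumes perm: "\<pi> permutes {1..n}" and avoids: "avoids321 n \<pi>"
  shows "strict_mono_on (excedances n \<pi>) \<pi>"
proof (rule strict_mono_onI, rule ccontr)
  fix e e' assume e: "e \<in> excedances n \<pi>" and e': "e' \<in> excedances n \<pi>"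
    and "e < e'" and "\<not> \<pi> e < \<pi> e'"
  have inj: "inj \<pi>" using permutes_inj[OF perm] .
  have img: "\<pi> k \<in> {1..n}" if "k \<in> {1..n}" for k
    using permutes_in_image[OF perm] that by blast
  have "\<pi> e \<noteq> \<pi> e'" using inj \<open>e < e'\<close> by (metis injD less_irrefl)
  with \<open>\<not> \<pi> e < \<pi> e'\<close> have "\<pi> e' < \<pi> e" by simp
  have bounds: "1 \<le> e" "e' \<le> n" "e' < \<pi> e'" "\<pi> e' \<le> n"
    using e e' img unfolding excedances_def by auto
  \<comment> \<open>Everything after \<open>e'\<close> lies above \<open>\<pi> e'\<close>, else \<open>e < e' < k\<close> is a 321 pattern;
      as \<open>\<pi> e' > e'\<close> there is no room for that.\<close>
  have into: "\<pi> ` {e'<..n} \<subseteq> {\<pi> e'<..n}"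
  proof
    fix v assume "v \<in> \<pi> ` {e'<..n}"
    then obtain k where k: "k \<in> {e'<..n}" "v = \<pi> k" by blast
    have "\<not> (\<pi> k < \<pi> e' \<and> \<pi> e' < \<pi> e)"
      using avoids bounds k \<open>e < e'\<close> unfolding avoids321_def by auto
    moreover have "\<pi> k \<noteq> \<pi> e'" using inj k by (metis injD greaterThanAtMost_iff less_irrefl)
    moreover have "\<pi> k \<le> n" using img k bounds by fastforce
    ultimately show "v \<in> {\<pi> e'<..n}" using k \<open>\<pi> e' < \<pi> e\<close> by auto
  qed
  have "card {e'<..n} \<le> card {\<pi> e'<..n}"
    using card_inj_on_le[OF inj_on_subset[OF inj subset_UNIV] into] by simp
  with bounds show False by simp
qed

theorem mainTheorem13:
  fixes n :: nat and \<pi> :: "nat \<Rightarrow> nat"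
  assumes "\<pi> permutes {1..n}" and "avoids321 n \<pi>" and "\<pi> \<noteq> id"
  shows "let xs = sorted_list_of_set (excedances n \<pi>); r = length xs in
    int (card (conn_set n \<pi>)) =
      int (xs ! 0)
      + (\<Sum>j\<in>{1..<r}. max (int (xs ! j) - int (\<pi> (xs ! (j - 1)))) 0)
      + (int n - int (\<pi> (xs ! (r - 1))))"
proof -
  let ?E = "excedances n \<pi>"
  let ?U = "\<Union>e\<in>?E. {e<..\<pi> e}"
  define xs where "xs = sorted_list_of_set ?E"
  have "finite ?E" unfolding excedances_def by simp
  then have set_xs: "set xs = ?E" unfolding xs_def by simp
  with excedances_nonempty[OF assms(1,3)] have "xs \<noteq> []" by auto
  have "sorted_wrt (<) xs" unfolding xs_def by (rule strict_sorted_list_of_set)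
  moreover have "sorted_wrt (<) (map \<pi> xs)"
    using \<open>sorted_wrt (<) xs\<close> avoids321_strict_mono_on_excedances[OF assms(1,2)] set_xs
    by (auto intro: sorted_wrt_map_mono dest: strict_mono_onD)
  moreover have "\<forall>x\<in>set xs. x < \<pi> x" using set_xs unfolding excedances_def by auto
  ultimately have card_U: "int (card ?U) = int (\<pi> (last xs)) - int (hd xs) - gap_sum \<pi> xs"
    using card_UN_chain_intervals[OF \<open>xs \<noteq> []\<close>] set_xs by simp
  have "\<pi> e \<le> n" if "e \<in> ?E" for e
    using that permutes_in_image[OF assms(1), of e] unfolding excedances_def by auto
  then have "?U \<subseteq> {1..n}"
    unfolding excedances_def by fastforce
  then have "card (conn_set n \<pi>) = n - card ?U" "card ?U \<le> n"
    unfolding conn_set_eq_Diff_UN_excedances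
    using card_Diff_subset[of ?U "{1..n}"] card_mono[of "{1..n}" ?U] finite_subset by auto
  with card_U \<open>xs \<noteq> []\<close> show ?thesis
    unfolding Let_def xs_def[symmetric] gap_sum_def by (simp add: hd_conv_nth last_conv_nth)
qed

end
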